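(* WL-powerful GNNs cannot, in general, distinguish a satisfiable residual formula from an unsatisfiable one even after $\Theta(n)$ variable assignments, where $n$ is the number of variables. Precisely: there is a constant $C>0$ such that for every integer $N\ge 4$ there exist 3-SAT formulas $f$ (satisfiable) and $\tilde f$ (unsatisfiable), each with at most $CN$ variables, such that for every partial assignment $\sigma$ of at most $\lfloor N/2\rfloor-1$ variables of $f$ there is a partial assignment $\tilde\sigma$ of variables of $\tilde f$ with $\mathrm{LCN}(\sigma(f))$ and $\mathrm{LCN}(\tilde\sigma(\tilde f))$ indistinguishable by the WL test; in particular, when $\sigma$ is the restriction of a satisfying assignment of $f$, the residual formula $\sigma(f)$ is satisfiable while $\tilde\sigma(\tilde f)$ is unsatisfiable, yet they are WL-indistinguishable.
   Context: A 3-SAT formula is a CNF formula (set of clauses, each a set of literals) with every clause of at most 3 literals. For a CNF formula $f$ on variables $x_1,\dots,x_n$, $\mathrm{LCN}(f)$ is the edge-colored graph with vertices the $2n$ literals $x_i,\neg x_i$ and one vertex per clause, a "literal-clause" edge $\{\ell,c\}$ whenever $\ell\in c$, and a differently colored "literal-literal" edge $\{x_i,\neg x_i\}$ for each $i$. For a partial assignment $\sigma$, $\sigma(f)$ denotes the residual formula and $\mathrm{LCN}(\sigma(f))$ is $\mathrm{LCN}(f)$ with literal vertices set true by $\sigma$ labeled $\top$, those set false labeled $\bot$, all others a default label. The WL test (color refinement) starts from the vertex labels and repeatedly replaces each vertex color by the pair (old color, for each edge color $c$ the multiset of old colors of neighbors via $c$-colored edges) until the partition stabilizes; run on the disjoint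 union of two graphs, they are indistinguishable iff every color occurs equally often in both. A WL-powerful GNN is one whose distinguishing power equals that of the WL test. *)

theory Defs
  imports Complex_Main "HOL-Library.Multiset"
begin

text \<open>Variables are natural numbers 0..n-1. A literal is a pair (i, p): (i, True) is x_i,
 (i, False) is the negation of x_i.\<close>

type_synonym lit = "nat \<times> bool"
type_synonym clause = "lit set"
type_synonym cnf = "nat \<times> clause set"

definition nvars :: "cnf \<Rightarrow> nat" where
  "nvars f = fst f"

definition clauses :: "cnf \<Rightarrow> clause set" where
  "clauses f = snd f"

definition wf_cnf :: "cnf \<Rightarrow> bool" where
  "wf_cnf f \<longleftrightarrow> finite (clauses f) \<and>
     (\<forall>c\<in>clauses f. \<forall>l\<in>c. fst l < nvars f)"

definition is_3sat :: "cnf \<Rightarrow> bool" where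
  "is_3sat f \<longleftrightarrow> wf_cnf f \<and> (\<forall>c\<in>clauses f. card c \<le> 3)"

definition satisfies :: "(nat \<Rightarrow> bool) \<Rightarrow> cnf \<Rightarrow> bool" where
  "satisfies \<tau> f \<longleftrightarrow> (\<forall>c\<in>clauses f. \<exists>l\<in>c. \<tau> (fst l) = snd l)"

definition satisfiable :: "cnf \<Rightarrow> bool" where
  "satisfiable f \<longleftrightarrow> (\<exists>\<tau>. satisfies \<tau> f)"

definition partial_assignment :: "cnf \<Rightarrow> (nat \<rightharpoonup> bool) \<Rightarrow> bool" where
  "partial_assignment f \<sigma> \<longleftrightarrow> dom \<sigma> \<subseteq> {..<nvars f}"

text \<open>The residual formula sigma(f) is satisfiable iff f has a satisfying assignment
  extending sigma.\<close>
definition residual_satisfiable :: "cnf \<Rightarrow> (nat \<rightharpoonup> bool) \<Rightarrow> bool" where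
  "residual_satisfiable f \<sigma> \<longleftrightarrow>
     (\<exists>\<tau>. (\<forall>i\<in>dom \<sigma>. \<sigma> i = Some (\<tau> i)) \<and> satisfies \<tau> f)"

text \<open>A graph is given by a vertex set V, a vertex labelling lab and, for every edge colour e,
  an (undirected) adjacency relation E e.\<close>

type_synonym ('v, 'l, 'e) lgraph = "'v set \<times> ('v \<Rightarrow> 'l) \<times> ('e \<Rightarrow> 'v \<Rightarrow> 'v \<Rightarrow> bool)"

text \<open>wl_eq V lab E k u v: u and v receive the same colour after k rounds of colour refinement.
  A colour class is represented by the set of vertices in it; the new colour of u is its old
  colour together with, for each edge colour e, the multiset of old colours of its
  e-neighbours.\<close>
fun wl_eq :: "'v set \<Rightarrow> ('v \<Rightarrow> 'l) \<Rightarrow> ('e \<Rightarrow> 'v \<Rightarrow> 'v \<Rightarrow> bool) \<Rightarrow> nat \<Rightarrow> 'v \<Rightarrow> 'v \<Rightarrow> bool" where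
  "wl_eq V lab E 0 u v = (lab u = lab v)"
| "wl_eq V lab E (Suc k) u v =
     (wl_eq V lab E k u v \<and>
      (\<forall>e. image_mset (\<lambda>w. {z\<in>V. wl_eq V lab E k w z}) (mset_set {w\<in>V. E e u w}) =
           image_mset (\<lambda>w. {z\<in>V. wl_eq V lab E k w z}) (mset_set {w\<in>V. E e v w})))"

definition disj_union :: "('v, 'l, 'e) lgraph \<Rightarrow> ('w, 'l, 'e) lgraph \<Rightarrow> ('v + 'w, 'l, 'e) lgraph" where
  "disj_union G H = (case G of (V1, l1, E1) \<Rightarrow> case H of (V2, l2, E2) \<Rightarrow>
     (Inl ` V1 \<union> Inr ` V2, case_sum l1 l2,
      \<lambda>e a b. (case (a, b) of (Inl x, Inl y) \<Rightarrow> E1 e x y | (Inr x, Inr y) \<Rightarrow> E2 e x y | _ \<Rightarrow> False)))"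

text \<open>Two graphs are WL-indistinguishable iff, running colour refinement on their disjoint
  union, every colour occurs equally often in both graphs. Since the partitions only get
  finer, requiring this for every round k is the same as requiring it for the stable
  partition.\<close>
definition wl_indist :: "('v, 'l, 'e) lgraph \<Rightarrow> ('w, 'l, 'e) lgraph \<Rightarrow> bool" where
  "wl_indist G H \<longleftrightarrow> (case disj_union G H of (V, lab, E) \<Rightarrow>
     (\<forall>k. \<forall>u\<in>V.
        card {x\<in>fst G. wl_eq V lab E k (Inl x) u} = card {y\<in>fst H. wl_eq V lab E k (Inr y) u}))"

datatype vlabel = LTop | LBot | LDefault

text \<open>Edge colours: True = literal-clause edge, False = literal-literal edge.\<close>
type_synonym lcn_vertex = "lit + clause"

definition LCN :: "cnf \<Rightarrow> (nat \<rightharpoonup> bool) \<Rightarrow> (lcn_vertex, vlabel, bool) lgraph" where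
  "LCN f \<sigma> =
    (Inl ` ({..<nvars f} \<times> UNIV) \<union> Inr ` clauses f,
     (\<lambda>a. case a of
            Inl (i, p) \<Rightarrow> (case \<sigma> i of None \<Rightarrow> LDefault
                                   | Some q \<Rightarrow> (if q = p then LTop else LBot))
          | Inr _ \<Rightarrow> LDefault),
     (\<lambda>e a b. if e then
                 (case (a, b) of (Inl l, Inr c) \<Rightarrow> l \<in> c | (Inr c, Inl l) \<Rightarrow> l \<in> c | _ \<Rightarrow> False)
               else
                 (case (a, b) of (Inl (i, p), Inl (j, q)) \<Rightarrow> i = j \<and> p \<noteq> q | _ \<Rightarrow> False)))"

end

theory Submission
  imports Defs "HOL-Combinatorics.Permutations"
begin

text \<open>Both formulas consist of \<open>N\<close> disjoint two-variable gadgets, each a set of four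
  2-clauses in which every literal occurs exactly twice: \<open>f\<close> uses a satisfiable gadget
  throughout, while \<open>f'\<close> has the unsatisfiable gadget of all four 2-clauses in place 0.
  An assignment of fewer than \<open>N\<close> variables leaves some gadget \<open>j\<^sub>0\<close> untouched, and
  exchanging the gadgets \<open>0\<close> and \<open>j\<^sub>0\<close> turns it into an assignment of \<open>f'\<close> that agrees
  with it on every touched gadget. Colour the vertices of a touched gadget by the gadget,
  their place in it and the assignment of its two variables, and the vertices of untouched
  gadgets merely as literal or clause vertices. By regularity of the gadgets this is an
  equitable colouring of both LCN graphs, with the same number of vertices of each colour;
  since colour refinement never separates two vertices of the same colour of an equitable
  colouring, the WL test cannot distinguish the two graphs.\<close>

section \<open>Equitable colourings and colour refinement\<close>

lemma wl_eq_sym: "wl_eq V lab E k u v \<Longrightarrow> wl_eq V lab E k v u"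
  by (induction k) auto

lemma wl_eq_trans: "wl_eq V lab E k u v \<Longrightarrow> wl_eq V lab E k v w \<Longrightarrow> wl_eq V lab E k u w"
  by (induction k) auto

definition equitable_colouring ::
  "'v set \<Rightarrow> ('v \<Rightarrow> 'l) \<Rightarrow> ('e \<Rightarrow> 'v \<Rightarrow> 'v \<Rightarrow> bool) \<Rightarrow>
   ('c \<Rightarrow> 'l) \<Rightarrow> ('e \<Rightarrow> 'c \<Rightarrow> 'c multiset) \<Rightarrow> ('v \<Rightarrow> 'c) \<Rightarrow> bool" where
  "equitable_colouring V lab E \<Lambda> Nb col \<longleftrightarrow>
     (\<forall>u\<in>V. lab u = \<Lambda> (col u) \<and>
        (\<forall>e. image_mset col (mset_set {w\<in>V. E e u w}) = Nb e (col u)))"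

lemma wl_eq_if_same_colour:
  assumes eq: "equitable_colouring V lab E \<Lambda> Nb col"
  shows "u \<in> V \<Longrightarrow> v \<in> V \<Longrightarrow> col u = col v \<Longrightarrow> wl_eq V lab E k u v"
proof (induction k arbitrary: u v)
  case 0
  then show ?case using eq by (simp add: equitable_colouring_def)
next
  case (Suc k)
  define cls where "cls = (\<lambda>w. {z\<in>V. wl_eq V lab E k w z})"
  define rep where "rep c = (SOME w. w \<in> V \<and> col w = c)" for c
  have cls_rep: "cls w = cls (rep (col w))" if "w \<in> V" for w
  proof -
    have "rep (col w) \<in> V \<and> col (rep (col w)) = col w"
      unfolding rep_def using someI[of "\<lambda>w'. w' \<in> V \<and> col w' = col w"] that by blast
    then have "wl_eq V lab E k w (rep (col w))"
      using Suc.IH that by metis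
    then show ?thesis
      unfolding cls_def by (meson wl_eq_sym wl_eq_trans)
  qed
  have nbrs: "image_mset cls (mset_set {w\<in>V. E e x w}) = image_mset (cls \<circ> rep) (Nb e (col x))"
    if "x \<in> V" for x e
  proof -
    have "image_mset cls (mset_set {w\<in>V. E e x w}) =
        image_mset (cls \<circ> rep \<circ> col) (mset_set {w\<in>V. E e x w})"
      using cls_rep by (cases "finite {w\<in>V. E e x w}") (auto intro!: image_mset_cong)
    also have "\<dots> = image_mset (cls \<circ> rep) (Nb e (col x))"
      using eq that by (simp add: equitable_colouring_def flip: image_mset.compositionality)
    finally show ?thesis .
  qed
  have "image_mset cls (mset_set {w\<in>V. E e u w}) = image_mset cls (mset_set {w\<in>V. E e v w})" for e
    using nbrs Suc.prems by simp
  then show ?case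
    using Suc.IH[OF Suc.prems] by (simp add: cls_def)
qed

lemma equitable_colouring_disj_union:
  assumes eq1: "equitable_colouring V1 l1 E1 \<Lambda> Nb c1"
    and eq2: "equitable_colouring V2 l2 E2 \<Lambda> Nb c2"
    and du: "disj_union (V1, l1, E1) (V2, l2, E2) = (V, lab, E)"
  shows "equitable_colouring V lab E \<Lambda> Nb (case_sum c1 c2)"
proof -
  have V: "V = Inl ` V1 \<union> Inr ` V2" and lab: "lab = case_sum l1 l2"
    and E: "\<And>e x y. E e (Inl x) (Inl y) = E1 e x y" "\<And>e x y. E e (Inr x) (Inr y) = E2 e x y"
      "\<And>e x y. \<not> E e (Inl x) (Inr y)" "\<And>e x y. \<not> E e (Inr x) (Inl y)"
    using du by (auto simp: disj_union_def)
  have "{w\<in>V. E e (Inl x) w} = Inl ` {w\<in>V1. E1 e x w}"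
    and "{w\<in>V. E e (Inr y) w} = Inr ` {w\<in>V2. E2 e y w}" for e x y
    unfolding V by (auto simp: E elim: sumE)
  then have "mset_set {w\<in>V. E e (Inl x) w} = image_mset Inl (mset_set {w\<in>V1. E1 e x w})"
    and "mset_set {w\<in>V. E e (Inr y) w} = image_mset Inr (mset_set {w\<in>V2. E2 e y w})" for e x y
    by (simp_all add: image_mset_mset_set)
  then show ?thesis
    using eq1 eq2 unfolding equitable_colouring_def V lab
    by (auto simp: image_mset.compositionality comp_def)
qed

lemma wl_indist_if_equitable_colourings:
  assumes eq1: "equitable_colouring V1 l1 E1 \<Lambda> Nb c1"
    and eq2: "equitable_colouring V2 l2 E2 \<Lambda> Nb c2"
    and count: "\<And>S. card {x\<in>V1. c1 x \<in> S} = card {y\<in>V2. c2 y \<in> S}"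
  shows "wl_indist (V1, l1, E1) (V2, l2, E2)"
proof -
  obtain V lab E where du: "disj_union (V1, l1, E1) (V2, l2, E2) = (V, lab, E)"
    by (metis prod_cases3)
  let ?col = "case_sum c1 c2"
  have eq: "equitable_colouring V lab E \<Lambda> Nb ?col"
    by (rule equitable_colouring_disj_union[OF eq1 eq2 du])
  have V: "V = Inl ` V1 \<union> Inr ` V2"
    using du by (simp add: disj_union_def)
  have "card {x\<in>V1. wl_eq V lab E k (Inl x) u} = card {y\<in>V2. wl_eq V lab E k (Inr y) u}" for k u
  proof -
    define S where "S = ?col ` {z\<in>V. wl_eq V lab E k z u}"
    \<comment> \<open>the WL class of \<open>u\<close> is a union of colour classes\<close>
    have "wl_eq V lab E k z u \<longleftrightarrow> ?col z \<in> S" if "z \<in> V" for z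
      using that wl_eq_trans[OF wl_eq_if_same_colour[OF eq]] unfolding S_def by blast
    then have "{x\<in>V1. wl_eq V lab E k (Inl x) u} = {x\<in>V1. c1 x \<in> S}"
      and "{y\<in>V2. wl_eq V lab E k (Inr y) u} = {y\<in>V2. c2 y \<in> S}"
      unfolding V by auto
    then show ?thesis
      using count by simp
  qed
  then show ?thesis
    unfolding wl_indist_def du by simp
qed

definition lcn_vertices :: "cnf \<Rightarrow> lcn_vertex set" where
  "lcn_vertices f = Inl ` ({..<nvars f} \<times> UNIV) \<union> Inr ` clauses f"

fun lcn_label :: "(nat \<rightharpoonup> bool) \<Rightarrow> lcn_vertex \<Rightarrow> vlabel" where
  "lcn_label \<sigma> (Inl (i, p)) =
     (case \<sigma> i of None \<Rightarrow> LDefault | Some q \<Rightarrow> if q = p then LTop else LBot)"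
| "lcn_label \<sigma> (Inr c) = LDefault"

fun lcn_edge :: "bool \<Rightarrow> lcn_vertex \<Rightarrow> lcn_vertex \<Rightarrow> bool" where
  "lcn_edge True (Inl l) (Inr c) = (l \<in> c)"
| "lcn_edge True (Inr c) (Inl l) = (l \<in> c)"
| "lcn_edge False (Inl (i, p)) (Inl (j, q)) = (i = j \<and> p \<noteq> q)"
| "lcn_edge _ _ _ = False"

lemma LCN_eq: "LCN f \<sigma> = (lcn_vertices f, lcn_label \<sigma>, lcn_edge)"
proof -
  have "(\<lambda>a. case a of Inl (i, p) \<Rightarrow> (case \<sigma> i of None \<Rightarrow> LDefault
            | Some q \<Rightarrow> if q = p then LTop else LBot) | Inr _ \<Rightarrow> LDefault) = lcn_label \<sigma>"
    by (auto split: sum.split)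
  moreover have "(\<lambda>e a b. if e then (case (a, b) of (Inl l, Inr c) \<Rightarrow> l \<in> c
            | (Inr c, Inl l) \<Rightarrow> l \<in> c | _ \<Rightarrow> False)
          else (case (a, b) of (Inl (i, p), Inl (j, q)) \<Rightarrow> i = j \<and> p \<noteq> q | _ \<Rightarrow> False)) =
        lcn_edge"
    by (intro ext) (auto split: sum.split)
  ultimately show ?thesis
    unfolding LCN_def lcn_vertices_def by simp
qed

lemma finite_lcn_vertices: "wf_cnf f \<Longrightarrow> finite (lcn_vertices f)"
  by (simp add: lcn_vertices_def wf_cnf_def)

lemma lcn_neighbours_lit_False:
  "i < nvars f \<Longrightarrow> {w\<in>lcn_vertices f. lcn_edge False (Inl (i, p)) w} = {Inl (i, \<not> p)}"
  by (auto simp: lcn_vertices_def elim: lcn_edge.elims)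

lemma lcn_neighbours_lit_True:
  "{w\<in>lcn_vertices f. lcn_edge True (Inl l) w} = Inr ` {c\<in>clauses f. l \<in> c}"
  by (auto simp: lcn_vertices_def elim: lcn_edge.elims)

lemma lcn_neighbours_clause_False:
  "{w\<in>lcn_vertices f. lcn_edge False (Inr c) w} = {}"
  by (auto elim: lcn_edge.elims)

lemma lcn_neighbours_clause_True:
  assumes "wf_cnf f" "c \<in> clauses f"
  shows "{w\<in>lcn_vertices f. lcn_edge True (Inr c) w} = Inl ` c"
  using assms by (fastforce simp: lcn_vertices_def wf_cnf_def mem_Times_iff elim: lcn_edge.elims)

section \<open>Regular two-variable gadgets\<close>

definition regular_gadget :: "clause set \<Rightarrow> bool" where
  "regular_gadget G \<longleftrightarrow> card G = 4 \<and> (\<forall>c\<in>G. card c = 2 \<and> (\<forall>l\<in>c. fst l < 2)) \<and>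
     (\<forall>r<2. \<forall>p. card {c\<in>G. (r, p) \<in> c} = 2)"

lemma regular_gadget_wf_cnf: "regular_gadget G \<Longrightarrow> wf_cnf (2, G)"
  by (auto simp: regular_gadget_def wf_cnf_def nvars_def clauses_def intro: card_ge_0_finite)

datatype colour = Free_lit | Free_clause
  | Lit "clause set" nat bool "bool option" "bool option"
  | Clause "clause set" clause "bool option" "bool option"

fun gadget_colour :: "clause set \<Rightarrow> bool option \<Rightarrow> bool option \<Rightarrow> lcn_vertex \<Rightarrow> colour" where
  "gadget_colour G a b (Inl (r, p)) = (if a = None \<and> b = None then Free_lit else Lit G r p a b)"
| "gadget_colour G a b (Inr c) = (if a = None \<and> b = None then Free_clause else Clause G c a b)"

fun colour_label :: "colour \<Rightarrow> vlabel" where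
  "colour_label (Lit G r p a b) = lcn_label (\<lambda>i. if i = 0 then a else b) (Inl (r, p))"
| "colour_label _ = LDefault"

text \<open>A colour of a touched gadget determines the gadget, the vertex and the assignment of
  the gadget's variables, so its label and neighbour colours can be read off the gadget.\<close>

fun colour_nbrs :: "bool \<Rightarrow> colour \<Rightarrow> colour multiset" where
  "colour_nbrs True Free_lit = {#Free_clause, Free_clause#}"
| "colour_nbrs False Free_lit = {#Free_lit#}"
| "colour_nbrs True Free_clause = {#Free_lit, Free_lit#}"
| "colour_nbrs False Free_clause = {#}"
| "colour_nbrs e (Lit G r p a b) =
     image_mset (gadget_colour G a b) (mset_set {w\<in>lcn_vertices (2, G). lcn_edge e (Inl (r, p)) w})"
| "colour_nbrs e (Clause G c a b) =
     image_mset (gadget_colour G a b) (mset_set {w\<in>lcn_vertices (2, G). lcn_edge e (Inr c) w})"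

lemma image_mset_mset_set_eq_replicate:
  assumes "\<And>x. x \<in> A \<Longrightarrow> g x = k"
  shows "image_mset g (mset_set A) = replicate_mset (card A) k"
proof (cases "finite A")
  case True
  then have "image_mset g (mset_set A) = image_mset (\<lambda>_. k) (mset_set A)"
    using assms by (intro image_mset_cong) simp
  with True show ?thesis
    by (simp add: image_mset_const_eq)
qed simp

lemma free_gadget_colour_nbrs:
  assumes reg: "regular_gadget G" and x: "x \<in> lcn_vertices (2, G)"
  shows "image_mset (gadget_colour G None None) (mset_set {w\<in>lcn_vertices (2, G). lcn_edge e x w}) =
         colour_nbrs e (gadget_colour G None None x)"
proof (cases x)
  case (Inl l)
  obtain r p where l: "l = (r, p)" by fastforce
  with x Inl have "r < 2" by (auto simp: lcn_vertices_def nvars_def)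
  then have "card (Inr ` {c\<in>G. (r, p) \<in> c} :: lcn_vertex set) = 2"
    using reg by (simp add: regular_gadget_def card_image)
  moreover have "image_mset (gadget_colour G None None) (mset_set (Inr ` {c\<in>G. (r, p) \<in> c})) =
      replicate_mset (card (Inr ` {c\<in>G. (r, p) \<in> c} :: lcn_vertex set)) Free_clause"
    by (rule image_mset_mset_set_eq_replicate) auto
  ultimately show ?thesis
    using Inl l \<open>r < 2\<close>
    by (cases e) (simp_all add: lcn_neighbours_lit_True lcn_neighbours_lit_False nvars_def
        clauses_def numeral_2_eq_2)
next
  case (Inr c)
  with x have "c \<in> G" by (auto simp: lcn_vertices_def clauses_def)
  then have "card (Inl ` c :: lcn_vertex set) = 2"
    using reg by (simp add: regular_gadget_def card_image)
  moreover have "image_mset (gadget_colour G None None) (mset_set (Inl ` c)) =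
      replicate_mset (card (Inl ` c :: lcn_vertex set)) Free_lit"
    by (rule image_mset_mset_set_eq_replicate) auto
  ultimately show ?thesis
    using Inr regular_gadget_wf_cnf[OF reg] \<open>c \<in> G\<close>
    by (cases e) (simp_all add: lcn_neighbours_clause_True lcn_neighbours_clause_False
        clauses_def numeral_2_eq_2)
qed

lemma regular_gadget_equitable:
  assumes reg: "regular_gadget G"
  shows "equitable_colouring (lcn_vertices (2, G)) (lcn_label \<tau>) lcn_edge colour_label colour_nbrs
           (gadget_colour G (\<tau> 0) (\<tau> 1))"
  unfolding equitable_colouring_def
proof (intro ballI conjI allI)
  fix u e assume u: "u \<in> lcn_vertices (2, G)"
  have "lcn_label \<tau> (Inl (r, p)) = colour_label (gadget_colour G (\<tau> 0) (\<tau> 1) (Inl (r, p)))"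
    if "r < 2" for r p
    using less_2_cases[OF that] by (auto split: option.split)
  then show "lcn_label \<tau> u = colour_label (gadget_colour G (\<tau> 0) (\<tau> 1) u)"
    using u by (auto simp: lcn_vertices_def nvars_def)
  show "image_mset (gadget_colour G (\<tau> 0) (\<tau> 1))
          (mset_set {w\<in>lcn_vertices (2, G). lcn_edge e u w}) =
        colour_nbrs e (gadget_colour G (\<tau> 0) (\<tau> 1) u)"
  proof (cases "\<tau> 0 = None \<and> \<tau> 1 = None")
    case True
    then show ?thesis
      using free_gadget_colour_nbrs[OF reg u] by simp
  next
    case False
    then show ?thesis
      by (cases u) auto
  qed
qed

definition shift_lit :: "nat \<Rightarrow> lit \<Rightarrow> lit" where
  "shift_lit j l = (2 * j + fst l, snd l)"

definition shift_clause :: "nat \<Rightarrow> clause \<Rightarrow> clause" where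
  "shift_clause j c = shift_lit j ` c"

definition shift_vertex :: "nat \<Rightarrow> lcn_vertex \<Rightarrow> lcn_vertex" where
  "shift_vertex j = map_sum (shift_lit j) (shift_clause j)"

definition gadget_cnf :: "nat \<Rightarrow> (nat \<Rightarrow> clause set) \<Rightarrow> cnf" where
  "gadget_cnf M \<Gamma> = (2 * M, \<Union>j<M. shift_clause j ` \<Gamma> j)"

fun local_vertex :: "lcn_vertex \<Rightarrow> bool" where
  "local_vertex (Inl l) \<longleftrightarrow> fst l < 2"
| "local_vertex (Inr c) \<longleftrightarrow> c \<noteq> {} \<and> (\<forall>l\<in>c. fst l < 2)"

fun gadget_index :: "lcn_vertex \<Rightarrow> nat" where
  "gadget_index (Inl l) = fst l div 2"
| "gadget_index (Inr c) = fst (SOME l. l \<in> c) div 2"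

definition unshift_lit :: "lit \<Rightarrow> lit" where
  "unshift_lit l = (fst l mod 2, snd l)"

definition unshift_vertex :: "lcn_vertex \<Rightarrow> lcn_vertex" where
  "unshift_vertex = map_sum unshift_lit (image unshift_lit)"

lemma local_vertex_if_regular_gadget:
  "regular_gadget G \<Longrightarrow> x \<in> lcn_vertices (2, G) \<Longrightarrow> local_vertex x"
  by (force simp: regular_gadget_def lcn_vertices_def nvars_def clauses_def)

lemma double_add_eq_iff:
  "a < 2 \<Longrightarrow> b < 2 \<Longrightarrow> 2 * j + a = 2 * j' + b \<longleftrightarrow> j = j' \<and> a = (b::nat)"
  by presburger

lemma shift_lit_eq_iff:
  "fst l < 2 \<Longrightarrow> fst l' < 2 \<Longrightarrow> shift_lit j l = shift_lit j' l' \<longleftrightarrow> j = j' \<and> l = l'"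
  by (auto simp: shift_lit_def prod_eq_iff double_add_eq_iff)

lemma shift_vertex_inverse:
  assumes "local_vertex x"
  shows "gadget_index (shift_vertex j x) = j" "unshift_vertex (shift_vertex j x) = x"
proof -
  have lit: "fst (shift_lit j l) div 2 = j" "unshift_lit (shift_lit j l) = l" if "fst l < 2" for l
    using that by (auto simp: shift_lit_def unshift_lit_def prod_eq_iff)
  show "gadget_index (shift_vertex j x) = j"
  proof (cases x)
    case (Inr c)
    with assms have "(SOME l. l \<in> shift_clause j c) \<in> shift_clause j c"
      by (auto simp: shift_clause_def intro: someI)
    with assms Inr show ?thesis
      by (auto simp: shift_vertex_def shift_clause_def lit)
  qed (use assms lit in \<open>simp add: shift_vertex_def\<close>)
  show "unshift_vertex (shift_vertex j x) = x"
    using assms lit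
    by (cases x) (auto simp: shift_vertex_def unshift_vertex_def shift_clause_def image_image)
qed

lemma lcn_edge_shift_vertex:
  assumes "local_vertex x" "local_vertex y"
  shows "lcn_edge e (shift_vertex j x) (shift_vertex j' y) \<longleftrightarrow> j = j' \<and> lcn_edge e x y"
proof -
  have mem: "(2 * i + r, p) \<in> shift_clause i' c \<longleftrightarrow> i = i' \<and> (r, p) \<in> c"
    if "r < 2" "\<forall>l\<in>c. fst l < 2" for i i' r p c
    using that shift_lit_eq_iff[of "(r, p)"] unfolding shift_clause_def image_iff
    by (metis fst_conv shift_lit_def snd_conv)
  show ?thesis
    using assms
    by (cases x; cases y; cases e) (auto simp: shift_vertex_def mem shift_lit_def double_add_eq_iff)
qed

lemma lcn_label_shift_vertex:
  "lcn_label \<sigma> (shift_vertex j x) = lcn_label (\<lambda>i. \<sigma> (2 * j + i)) x"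
  by (cases x) (auto simp: shift_vertex_def shift_lit_def split: option.split)

lemma lcn_vertices_gadget_cnf:
  "lcn_vertices (gadget_cnf M \<Gamma>) = (\<Union>j<M. shift_vertex j ` lcn_vertices (2, \<Gamma> j))"
proof -
  have "{..<2 * M} \<times> UNIV = (\<Union>j<M. shift_lit j ` ({..<2} \<times> UNIV))"
  proof (intro set_eqI iffI)
    fix l :: lit assume "l \<in> {..<2 * M} \<times> UNIV"
    then have "fst l div 2 < M" "l = shift_lit (fst l div 2) (fst l mod 2, snd l)"
      by (auto simp: shift_lit_def)
    then show "l \<in> (\<Union>j<M. shift_lit j ` ({..<2} \<times> UNIV))"
      by fastforce
  qed (auto simp: shift_lit_def)
  then show ?thesis
    by (simp add: lcn_vertices_def gadget_cnf_def nvars_def clauses_def shift_vertex_def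
        image_Un image_UN UN_Un_distrib image_image)
qed

lemma gadget_cnf_neighbours:
  assumes reg: "\<And>j. j < M \<Longrightarrow> regular_gadget (\<Gamma> j)"
    and x: "j < M" "x \<in> lcn_vertices (2, \<Gamma> j)"
  shows "{w\<in>lcn_vertices (gadget_cnf M \<Gamma>). lcn_edge e (shift_vertex j x) w} =
         shift_vertex j ` {w\<in>lcn_vertices (2, \<Gamma> j). lcn_edge e x w}"
proof -
  have "local_vertex x"
    using local_vertex_if_regular_gadget reg x by blast
  moreover have "local_vertex y" if "j' < M" "y \<in> lcn_vertices (2, \<Gamma> j')" for j' y
    using local_vertex_if_regular_gadget reg that by blast
  ultimately show ?thesis
    using x unfolding lcn_vertices_gadget_cnf by (auto simp: lcn_edge_shift_vertex)
qed

definition cnf_colour :: "(nat \<Rightarrow> clause set) \<Rightarrow> (nat \<rightharpoonup> bool) \<Rightarrow> lcn_vertex \<Rightarrow> colour" where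
  "cnf_colour \<Gamma> \<sigma> x =
     (let j = gadget_index x in gadget_colour (\<Gamma> j) (\<sigma> (2 * j)) (\<sigma> (2 * j + 1)) (unshift_vertex x))"

lemma cnf_colour_shift_vertex:
  "local_vertex x \<Longrightarrow>
   cnf_colour \<Gamma> \<sigma> (shift_vertex j x) = gadget_colour (\<Gamma> j) (\<sigma> (2 * j)) (\<sigma> (2 * j + 1)) x"
  by (simp add: cnf_colour_def shift_vertex_inverse)

lemma inj_on_shift_vertex:
  "regular_gadget G \<Longrightarrow> inj_on (shift_vertex j) (lcn_vertices (2, G))"
  by (rule inj_on_inverseI[of _ unshift_vertex])
    (use local_vertex_if_regular_gadget shift_vertex_inverse in blast)

lemma gadget_cnf_equitable:
  assumes reg: "\<And>j. j < M \<Longrightarrow> regular_gadget (\<Gamma> j)"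
  shows "equitable_colouring (lcn_vertices (gadget_cnf M \<Gamma>)) (lcn_label \<sigma>) lcn_edge
           colour_label colour_nbrs (cnf_colour \<Gamma> \<sigma>)"
  unfolding equitable_colouring_def
proof
  fix u assume "u \<in> lcn_vertices (gadget_cnf M \<Gamma>)"
  then obtain j x where j: "j < M" and x: "x \<in> lcn_vertices (2, \<Gamma> j)" and u: "u = shift_vertex j x"
    unfolding lcn_vertices_gadget_cnf by blast
  let ?\<tau> = "\<lambda>i. \<sigma> (2 * j + i)"
  let ?N = "\<lambda>e. {w\<in>lcn_vertices (2, \<Gamma> j). lcn_edge e x w}"
  have reg_j: "regular_gadget (\<Gamma> j)"
    using reg j by simp
  have colour: "cnf_colour \<Gamma> \<sigma> (shift_vertex j y) = gadget_colour (\<Gamma> j) (?\<tau> 0) (?\<tau> 1) y"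
    if "y \<in> lcn_vertices (2, \<Gamma> j)" for y
    using cnf_colour_shift_vertex[OF local_vertex_if_regular_gadget[OF reg_j that]] by simp
  have local_eq: "equitable_colouring (lcn_vertices (2, \<Gamma> j)) (lcn_label ?\<tau>) lcn_edge colour_label
      colour_nbrs (gadget_colour (\<Gamma> j) (?\<tau> 0) (?\<tau> 1))"
    using regular_gadget_equitable[OF reg_j] .
  have "image_mset (cnf_colour \<Gamma> \<sigma>) (mset_set {w\<in>lcn_vertices (gadget_cnf M \<Gamma>). lcn_edge e u w}) =
      image_mset (cnf_colour \<Gamma> \<sigma> \<circ> shift_vertex j) (mset_set (?N e))" for e
    using j x inj_on_shift_vertex[OF reg_j, of j]
    by (simp add: u gadget_cnf_neighbours reg image_mset_mset_set inj_on_subset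
        flip: image_mset.compositionality)
  also have "\<dots> e = image_mset (gadget_colour (\<Gamma> j) (?\<tau> 0) (?\<tau> 1)) (mset_set (?N e))" for e
    using colour
    by (intro image_mset_cong) (simp add: finite_lcn_vertices regular_gadget_wf_cnf reg_j)
  also have "\<dots> e = colour_nbrs e (cnf_colour \<Gamma> \<sigma> u)" for e
    using local_eq x by (simp add: u colour equitable_colouring_def)
  finally show "lcn_label \<sigma> u = colour_label (cnf_colour \<Gamma> \<sigma> u) \<and>
      (\<forall>e. image_mset (cnf_colour \<Gamma> \<sigma>)
              (mset_set {w\<in>lcn_vertices (gadget_cnf M \<Gamma>). lcn_edge e u w}) =
            colour_nbrs e (cnf_colour \<Gamma> \<sigma> u))"
    using local_eq x by (simp add: u colour lcn_label_shift_vertex equitable_colouring_def)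
qed

lemma card_cnf_colour:
  assumes reg: "\<And>j. j < M \<Longrightarrow> regular_gadget (\<Gamma> j)"
  shows "card {x\<in>lcn_vertices (gadget_cnf M \<Gamma>). cnf_colour \<Gamma> \<sigma> x \<in> S} =
    (\<Sum>j<M. card {x\<in>lcn_vertices (2, \<Gamma> j). gadget_colour (\<Gamma> j) (\<sigma> (2 * j)) (\<sigma> (2 * j + 1)) x \<in> S})"
    (is "?lhs = ?rhs")
proof -
  define A where "A = (SIGMA j:{..<M}. {x\<in>lcn_vertices (2, \<Gamma> j).
                          gadget_colour (\<Gamma> j) (\<sigma> (2 * j)) (\<sigma> (2 * j + 1)) x \<in> S})"
  have local: "local_vertex x" if "(j, x) \<in> A" for j x
    using that reg local_vertex_if_regular_gadget by (auto simp: A_def)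
  have "inj_on (\<lambda>(j, x). shift_vertex j x) A"
    by (rule inj_on_inverseI[of _ "\<lambda>y. (gadget_index y, unshift_vertex y)"])
      (auto simp: shift_vertex_inverse local)
  moreover have "(\<lambda>(j, x). shift_vertex j x) ` A =
      {x\<in>lcn_vertices (gadget_cnf M \<Gamma>). cnf_colour \<Gamma> \<sigma> x \<in> S}"
    using reg local_vertex_if_regular_gadget
    by (fastforce simp: A_def lcn_vertices_gadget_cnf cnf_colour_shift_vertex)
  ultimately have "?lhs = card A"
    using card_image by fastforce
  also have "\<dots> = ?rhs"
    using reg by (simp add: A_def finite_lcn_vertices regular_gadget_wf_cnf)
  finally show ?thesis .
qed

lemma card_free_gadget_colour:
  assumes "regular_gadget G"
  shows "card {x\<in>lcn_vertices (2, G). gadget_colour G None None x \<in> S} =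
    (if Free_lit \<in> S then 4 else 0) + (if Free_clause \<in> S then 4 else 0)"
proof -
  have "{x\<in>lcn_vertices (2, G). gadget_colour G None None x \<in> S} =
      (if Free_lit \<in> S then {..<2} \<times> UNIV else {}) <+> (if Free_clause \<in> S then G else {})"
    by (auto simp: lcn_vertices_def nvars_def clauses_def Plus_def)
  moreover have "card ({..<2::nat} \<times> (UNIV :: bool set)) = 4"
    by (simp add: card_cartesian_product)
  moreover have "finite G" "card G = 4"
    using assms by (auto simp: regular_gadget_def intro: card_ge_0_finite)
  ultimately show ?thesis
    by (simp add: card_Plus)
qed

definition untouched :: "(nat \<rightharpoonup> bool) \<Rightarrow> nat \<Rightarrow> bool" where
  "untouched \<sigma> j \<longleftrightarrow> \<sigma> (2 * j) = None \<and> \<sigma> (2 * j + 1) = None"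

definition permute_gadgets :: "(nat \<Rightarrow> nat) \<Rightarrow> (nat \<rightharpoonup> bool) \<Rightarrow> nat \<rightharpoonup> bool" where
  "permute_gadgets \<pi> \<sigma> i = \<sigma> (2 * \<pi> (i div 2) + i mod 2)"

lemma permute_gadgets_simps [simp]:
  "permute_gadgets \<pi> \<sigma> (2 * j) = \<sigma> (2 * \<pi> j)"
  "permute_gadgets \<pi> \<sigma> (Suc (2 * j)) = \<sigma> (Suc (2 * \<pi> j))"
  by (simp_all add: permute_gadgets_def)

lemma card_cnf_colour_permute_gadgets:
  assumes \<pi>: "\<pi> permutes {..<M}"
    and reg: "\<And>j. j < M \<Longrightarrow> regular_gadget (\<Gamma> j)" "\<And>j. j < M \<Longrightarrow> regular_gadget (\<Gamma>' j)"
    and touched: "\<And>j. j < M \<Longrightarrow> \<not> untouched \<sigma> (\<pi> j) \<Longrightarrow> \<Gamma>' j = \<Gamma> (\<pi> j)"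
  shows "card {x\<in>lcn_vertices (gadget_cnf M \<Gamma>'). cnf_colour \<Gamma>' (permute_gadgets \<pi> \<sigma>) x \<in> S} =
         card {x\<in>lcn_vertices (gadget_cnf M \<Gamma>). cnf_colour \<Gamma> \<sigma> x \<in> S}"
proof -
  define count where
    "count G j = card {x\<in>lcn_vertices (2, G). gadget_colour G (\<sigma> (2 * j)) (\<sigma> (2 * j + 1)) x \<in> S}"
    for G j
  have "count (\<Gamma>' j) (\<pi> j) = count (\<Gamma> (\<pi> j)) (\<pi> j)" if "j < M" for j
  proof (cases "untouched \<sigma> (\<pi> j)")
    case True
    moreover have "\<pi> j < M"
      using permutes_in_image[OF \<pi>] that by simp
    ultimately show ?thesis
      using reg that by (simp add: count_def untouched_def card_free_gadget_colour)
  qed (use touched that in simp)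
  then have "card {x\<in>lcn_vertices (gadget_cnf M \<Gamma>'). cnf_colour \<Gamma>' (permute_gadgets \<pi> \<sigma>) x \<in> S} =
      (\<Sum>j<M. count (\<Gamma> (\<pi> j)) (\<pi> j))"
    by (simp add: card_cnf_colour[OF reg(2)] count_def)
  also have "\<dots> = (\<Sum>j<M. count (\<Gamma> j) j)"
    using sum.permute[OF \<pi>, of "\<lambda>j. count (\<Gamma> j) j"] by (simp add: comp_def)
  also have "\<dots> = card {x\<in>lcn_vertices (gadget_cnf M \<Gamma>). cnf_colour \<Gamma> \<sigma> x \<in> S}"
    by (simp add: card_cnf_colour[OF reg(1)] count_def)
  finally show ?thesis .
qed

lemma wl_indist_permute_gadgets:
  assumes "\<pi> permutes {..<M}"
    and "\<And>j. j < M \<Longrightarrow> regular_gadget (\<Gamma> j)" "\<And>j. j < M \<Longrightarrow> regular_gadget (\<Gamma>' j)"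
    and "\<And>j. j < M \<Longrightarrow> \<not> untouched \<sigma> (\<pi> j) \<Longrightarrow> \<Gamma>' j = \<Gamma> (\<pi> j)"
  shows "wl_indist (LCN (gadget_cnf M \<Gamma>) \<sigma>) (LCN (gadget_cnf M \<Gamma>') (permute_gadgets \<pi> \<sigma>))"
  using gadget_cnf_equitable[OF assms(2), where \<sigma> = \<sigma>]
    gadget_cnf_equitable[OF assms(3), where \<sigma> = "permute_gadgets \<pi> \<sigma>"]
    card_cnf_colour_permute_gadgets[where \<Gamma> = \<Gamma> and \<Gamma>' = \<Gamma>' and \<sigma> = \<sigma>, OF assms, symmetric]
  unfolding LCN_eq by (rule wl_indist_if_equitable_colourings)

lemma partial_assignment_permute_gadgets:
  assumes "\<pi> permutes {..<M}" "partial_assignment (gadget_cnf M \<Gamma>) \<sigma>"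
  shows "partial_assignment (gadget_cnf M \<Gamma>') (permute_gadgets \<pi> \<sigma>)"
  unfolding partial_assignment_def
proof
  fix i assume "i \<in> dom (permute_gadgets \<pi> \<sigma>)"
  then have "2 * \<pi> (i div 2) + i mod 2 \<in> dom \<sigma>"
    by (simp add: permute_gadgets_def dom_def)
  then have "2 * \<pi> (i div 2) + i mod 2 < 2 * M"
    using assms(2) by (auto simp: partial_assignment_def gadget_cnf_def nvars_def)
  then have "\<pi> (i div 2) < M"
    by linarith
  then have "i div 2 < M"
    using permutes_in_image[OF assms(1)] by simp
  then show "i \<in> {..<nvars (gadget_cnf M \<Gamma>')}"
    by (simp add: gadget_cnf_def nvars_def)
qed

lemma ex_untouched_gadget:
  assumes "finite (dom \<sigma>)" "card (dom \<sigma>) < M"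
  obtains j where "j < M" "untouched \<sigma> j"
proof -
  have "\<exists>j<M. untouched \<sigma> j"
  proof (rule ccontr)
    assume all_touched: "\<not> (\<exists>j<M. untouched \<sigma> j)"
    have "{..<M} \<subseteq> (\<lambda>i. i div 2) ` dom \<sigma>"
    proof
      fix j assume "j \<in> {..<M}"
      then have "2 * j \<in> dom \<sigma> \<or> 2 * j + 1 \<in> dom \<sigma>"
        using all_touched by (auto simp: untouched_def)
      moreover have "(2 * j) div 2 = j" "(2 * j + 1) div 2 = j"
        by simp_all
      ultimately show "j \<in> (\<lambda>i. i div 2) ` dom \<sigma>"
        by (metis image_eqI)
    qed
    then have "M \<le> card ((\<lambda>i. i div 2) ` dom \<sigma>)"
      using card_mono[OF finite_imageI[OF assms(1)]] by fastforce
    also have "\<dots> \<le> card (dom \<sigma>)"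
      using card_image_le[OF assms(1)] .
    finally show False
      using assms(2) by simp
  qed
  then show ?thesis
    using that by blast
qed

section \<open>The two formulas\<close>

text \<open>The equivalence \<open>x\<^sub>0 \<longleftrightarrow> x\<^sub>1\<close>, padded with two tautologies to make it regular.\<close>

definition sat_gadget :: "clause set" where
  "sat_gadget = {{(0, True), (0, False)}, {(0, False), (1, True)},
                 {(1, True), (1, False)}, {(1, False), (0, True)}}"

definition unsat_gadget :: "clause set" where
  "unsat_gadget = {{(0, True), (1, True)}, {(0, True), (1, False)},
                   {(0, False), (1, True)}, {(0, False), (1, False)}}"

lemma regular_sat_gadget: "regular_gadget sat_gadget"
proof -
  have "{c\<in>sat_gadget. (r, p) \<in> c} =
      (if r = 0 then if p then {{(0, True), (0, False)}, {(1, False), (0, True)}}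
                     else {{(0, True), (0, False)}, {(0, False), (1, True)}}
       else if p then {{(0, False), (1, True)}, {(1, True), (1, False)}}
       else {{(1, True), (1, False)}, {(1, False), (0, True)}})" if "r < 2" for r p
    using less_2_cases[OF that] by (cases p) (auto simp: sat_gadget_def)
  then show ?thesis
    by (auto simp: regular_gadget_def sat_gadget_def doubleton_eq_iff)
qed

lemma regular_unsat_gadget: "regular_gadget unsat_gadget"
proof -
  have "{c\<in>unsat_gadget. (r, p) \<in> c} =
      (if r = 0 then {{(0, p), (1, True)}, {(0, p), (1, False)}}
       else {{(0, True), (1, p)}, {(0, False), (1, p)}})" if "r < 2" for r p
    using less_2_cases[OF that] by (cases p) (auto simp: unsat_gadget_def)
  then show ?thesis
    by (auto simp: regular_gadget_def unsat_gadget_def doubleton_eq_iff)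
qed

lemma satisfies_sat_gadget: "satisfies (\<lambda>_. True) (2, sat_gadget)"
  by (simp add: satisfies_def clauses_def sat_gadget_def)

lemma not_satisfies_unsat_gadget: "\<not> satisfies \<tau> (2, unsat_gadget)"
  by (cases "\<tau> 0"; cases "\<tau> 1") (auto simp: satisfies_def clauses_def unsat_gadget_def)

lemma satisfies_gadget_cnf_iff:
  "satisfies \<tau> (gadget_cnf M \<Gamma>) \<longleftrightarrow> (\<forall>j<M. satisfies (\<lambda>i. \<tau> (2 * j + i)) (2, \<Gamma> j))"
  by (auto simp: satisfies_def gadget_cnf_def clauses_def shift_clause_def shift_lit_def)

lemma is_3sat_gadget_cnf:
  assumes "\<And>j. j < M \<Longrightarrow> regular_gadget (\<Gamma> j)"
  shows "is_3sat (gadget_cnf M \<Gamma>)"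
proof -
  have "card (shift_clause j c) = card c" for j c
    by (simp add: shift_clause_def card_image inj_on_def shift_lit_def prod_eq_iff)
  moreover have "finite (\<Gamma> j)" if "j < M" for j
    using assms[OF that] by (simp add: regular_gadget_def card_ge_0_finite)
  ultimately show ?thesis
    using assms by (fastforce simp: is_3sat_def wf_cnf_def regular_gadget_def gadget_cnf_def
        nvars_def clauses_def shift_clause_def shift_lit_def)
qed

definition sat_cnf :: "nat \<Rightarrow> cnf" where
  "sat_cnf M = gadget_cnf M (\<lambda>_. sat_gadget)"

definition unsat_cnf :: "nat \<Rightarrow> cnf" where
  "unsat_cnf M = gadget_cnf M (\<lambda>j. if j = 0 then unsat_gadget else sat_gadget)"

lemma is_3sat_sat_cnf: "is_3sat (sat_cnf M)"
  by (simp add: sat_cnf_def is_3sat_gadget_cnf regular_sat_gadget)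

lemma is_3sat_unsat_cnf: "is_3sat (unsat_cnf M)"
  by (simp add: unsat_cnf_def is_3sat_gadget_cnf regular_sat_gadget regular_unsat_gadget)

lemma nvars_sat_cnf: "nvars (sat_cnf M) = 2 * M"
  and nvars_unsat_cnf: "nvars (unsat_cnf M) = 2 * M"
  by (simp_all add: sat_cnf_def unsat_cnf_def gadget_cnf_def nvars_def)

lemma satisfiable_sat_cnf: "satisfiable (sat_cnf M)"
  using satisfies_sat_gadget
  by (auto simp: satisfiable_def sat_cnf_def satisfies_gadget_cnf_iff)

lemma not_satisfiable_unsat_cnf: "0 < M \<Longrightarrow> \<not> satisfiable (unsat_cnf M)"
  using not_satisfies_unsat_gadget
  by (auto simp: satisfiable_def unsat_cnf_def satisfies_gadget_cnf_iff)

lemma wl_indist_sat_cnf_unsat_cnf: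
  assumes \<sigma>: "partial_assignment (sat_cnf M) \<sigma>" and few: "card (dom \<sigma>) < M"
  shows "\<exists>\<sigma>'. partial_assignment (unsat_cnf M) \<sigma>' \<and>
               wl_indist (LCN (sat_cnf M) \<sigma>) (LCN (unsat_cnf M) \<sigma>')"
proof -
  have "finite (dom \<sigma>)"
    using \<sigma> by (auto simp: partial_assignment_def nvars_sat_cnf intro: finite_subset)
  then obtain j0 where "j0 < M" "untouched \<sigma> j0"
    using ex_untouched_gadget few by blast
  let ?\<pi> = "Transposition.transpose 0 j0"
  have \<pi>: "?\<pi> permutes {..<M}"
    using \<open>j0 < M\<close> by (intro permutes_swap_id) auto
  have touched: "(if j = 0 then unsat_gadget else sat_gadget) = sat_gadget"
    if "\<not> untouched \<sigma> (?\<pi> j)" for j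
    using that \<open>untouched \<sigma> j0\<close> by auto
  show ?thesis
  proof (intro exI conjI)
    show "partial_assignment (unsat_cnf M) (permute_gadgets ?\<pi> \<sigma>)"
      using partial_assignment_permute_gadgets[OF \<pi>] \<sigma> unfolding sat_cnf_def unsat_cnf_def .
    show "wl_indist (LCN (sat_cnf M) \<sigma>) (LCN (unsat_cnf M) (permute_gadgets ?\<pi> \<sigma>))"
      unfolding sat_cnf_def unsat_cnf_def
      by (rule wl_indist_permute_gadgets[OF \<pi>])
        (simp_all add: touched regular_sat_gadget regular_unsat_gadget)
  qed
qed

lemma not_residual_satisfiable_unsat_cnf: "0 < M \<Longrightarrow> \<not> residual_satisfiable (unsat_cnf M) \<sigma>"
  using not_satisfiable_unsat_cnf by (auto simp: residual_satisfiable_def satisfiable_def)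

theorem corollary1:
  shows "\<exists>C::real. C > 0 \<and>
    (\<forall>N::nat. N \<ge> 4 \<longrightarrow>
      (\<exists>f f'. is_3sat f \<and> is_3sat f' \<and>
         real (nvars f) \<le> C * real N \<and> real (nvars f') \<le> C * real N \<and>
         satisfiable f \<and> \<not> satisfiable f' \<and>
         (\<forall>\<sigma>. partial_assignment f \<sigma> \<and> card (dom \<sigma>) \<le> N div 2 - 1 \<longrightarrow>
            (\<exists>\<sigma>'. partial_assignment f' \<sigma>' \<and>
                  wl_indist (LCN f \<sigma>) (LCN f' \<sigma>') \<and>
                  \<not> residual_satisfiable f' \<sigma>' \<and>
                  ((\<exists>\<tau>. satisfies \<tau> f \<and> (\<forall>i\<in>dom \<sigma>. \<sigma> i = Some (\<tau> i)))
                     \<longrightarrow> residual_satisfiable f \<sigma>)))))"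
proof (intro exI[of _ "2::real"] conjI allI impI)
  fix N :: nat
  assume "4 \<le> N"
  then have N: "0 < N" "N div 2 - 1 < N"
    by simp_all
  show "\<exists>f f'. is_3sat f \<and> is_3sat f' \<and>
         real (nvars f) \<le> 2 * real N \<and> real (nvars f') \<le> 2 * real N \<and>
         satisfiable f \<and> \<not> satisfiable f' \<and>
         (\<forall>\<sigma>. partial_assignment f \<sigma> \<and> card (dom \<sigma>) \<le> N div 2 - 1 \<longrightarrow>
            (\<exists>\<sigma>'. partial_assignment f' \<sigma>' \<and>
                  wl_indist (LCN f \<sigma>) (LCN f' \<sigma>') \<and>
                  \<not> residual_satisfiable f' \<sigma>' \<and>
                  ((\<exists>\<tau>. satisfies \<tau> f \<and> (\<forall>i\<in>dom \<sigma>. \<sigma> i = Some (\<tau> i)))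
                     \<longrightarrow> residual_satisfiable f \<sigma>)))"
    by (rule exI[of _ "sat_cnf N"], rule exI[of _ "unsat_cnf N"])
      (use N not_residual_satisfiable_unsat_cnf[of N]
        wl_indist_sat_cnf_unsat_cnf[where M = N, OF _ le_less_trans[OF _ N(2)]] in
        \<open>auto simp: is_3sat_sat_cnf is_3sat_unsat_cnf nvars_sat_cnf nvars_unsat_cnf
          satisfiable_sat_cnf not_satisfiable_unsat_cnf residual_satisfiable_def; blast\<close>)
qed simp

end
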